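(* Let $S$ be a polygonal domain and $P\in\mathcal{F}_2[S]$. Then $P$ can be normalized to a boundary configuration by a feasible schedule within $S$ in which neither robot makes a turn, and $P$ can be normalized to a corner configuration by a feasible schedule within $S$ in which each robot makes at most one turn.
   Context: A polygonal domain is a closed region bounded by an outer simple polygon, possibly containing polygonal holes. Robots are axis-parallel unit squares: a robot at $p$ occupies $p+\boxdot$, $\boxdot=\{q:\|q\|_\infty\le1/2\}$. A configuration of two robots is a pair $(p_1,p_2)$ with $\|p_1-p_2\|_\infty\ge1$; it is in $S$ if the interior of each robot is contained in $S$; $\mathcal{F}_2[S]$ is the set of such configurations. The inner Minkowski sum is $\mathrm{inner}(S)=\{x\in S:\min_{y\in\partial S}\|y-x\|_\infty\ge 1/2\}$, where $\partial S$ is the boundary of $S$. A configuration $(p_1,p_2)\in\mathcal{F}_2[S]$ is a boundary configuration if $p_1,p_2$ both lie on the boundary of $\mathrm{inner}(S)$, and a corner configuration if both lie at vertices of $\mathrm{inner}(S)$. A trajectory over $T$ is a $1$-Lipschitz (w.r.t. $L_1$) map $m:T\to\mathbb{R}^2$ with polygonal-chain image; a turn is a point of the image where two segments of different orientations meet. A schedule $(m_1,m_2)$ is feasible within $S$ if all its configurations lie in $\mathcal{F}_2[S]$. The orderings are $\{x(p_1)\ge x(p_2)+1\}$, $\{x(p_2)\ge x(p_1)+1\}$, $\{y(p_1)\ge y(p_2)+1\}$, $\{y(p_2)\ge y(p_1)+1\}$; two configurations are commonly ordered if they lie in a common ordering. Normalizing $P$ to a boundary (resp. corner) configuration means transforming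 it, by a feasible schedule within $S$, into a boundary (resp. corner) configuration commonly ordered with $P$. *)

theory Defs
  imports "HOL-Analysis.Analysis"
begin

type_synonym pt = "real \<times> real"

definition linf :: "pt \<Rightarrow> real" where
  "linf p = max \<bar>fst p\<bar> \<bar>snd p\<bar>"

definition lone :: "pt \<Rightarrow> real" where
  "lone p = \<bar>fst p\<bar> + \<bar>snd p\<bar>"

fun polyline :: "pt list \<Rightarrow> real \<Rightarrow> pt" where
  "polyline [] = (\<lambda>_. 0)"
| "polyline [a] = linepath a a"
| "polyline [a, b] = linepath a b"
| "polyline (a # b # c # rest) = linepath a b +++ polyline (b # c # rest)"

definition simple_polygon :: "pt list \<Rightarrow> bool" where
  "simple_polygon vs \<longleftrightarrow> length vs \<ge> 3 \<and> simple_path (polyline (vs @ [hd vs]))"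

definition polygon_curve :: "pt list \<Rightarrow> pt set" where
  "polygon_curve vs = path_image (polyline (vs @ [hd vs]))"

definition polygon_region :: "pt list \<Rightarrow> pt set" where
  "polygon_region vs = polygon_curve vs \<union> inside (polygon_curve vs)"

definition polygonal_domain :: "pt set \<Rightarrow> bool" where
  "polygonal_domain S \<longleftrightarrow>
     (\<exists>outer holes.
        simple_polygon outer \<and> (\<forall>h\<in>set holes. simple_polygon h) \<and>
        (\<forall>h\<in>set holes. polygon_region h \<subseteq> inside (polygon_curve outer)) \<and>
        (\<forall>i<length holes. \<forall>j<length holes. i \<noteq> j \<longrightarrow>
            polygon_region (holes ! i) \<inter> polygon_region (holes ! j) = {}) \<and>
        S = polygon_region outer - (\<Union>h\<in>set holes. inside (polygon_curve h)))"

definition robot :: "pt \<Rightarrow> pt set" where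
  "robot p = {q. linf (q - p) \<le> 1/2}"

definition F2 :: "pt set \<Rightarrow> (pt \<times> pt) set" where
  "F2 S = {(p1, p2). linf (p1 - p2) \<ge> 1 \<and> interior (robot p1) \<subseteq> S \<and> interior (robot p2) \<subseteq> S}"

definition inner :: "pt set \<Rightarrow> pt set" where
  "inner S = {x \<in> S. \<forall>y\<in>frontier S. linf (y - x) \<ge> 1/2}"

definition is_vertex :: "pt set \<Rightarrow> pt \<Rightarrow> bool" where
  "is_vertex A x \<longleftrightarrow> x \<in> frontier A \<and>
     \<not> (\<exists>e>0. \<exists>d. d \<noteq> 0 \<and> (\<forall>y\<in>ball x e. \<forall>z\<in>ball x e. \<forall>t::real.
            z = y + t *\<^sub>R d \<longrightarrow> (y \<in> A \<longleftrightarrow> z \<in> A)))"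

definition boundary_config :: "pt set \<Rightarrow> pt \<times> pt \<Rightarrow> bool" where
  "boundary_config S P \<longleftrightarrow> P \<in> F2 S \<and>
     fst P \<in> frontier (inner S) \<and> snd P \<in> frontier (inner S)"

definition corner_config :: "pt set \<Rightarrow> pt \<times> pt \<Rightarrow> bool" where
  "corner_config S P \<longleftrightarrow> P \<in> F2 S \<and>
     is_vertex (inner S) (fst P) \<and> is_vertex (inner S) (snd P)"

definition orderings :: "(pt \<times> pt) set set" where
  "orderings = {{(p1, p2). fst p1 \<ge> fst p2 + 1}, {(p1, p2). fst p2 \<ge> fst p1 + 1},
                {(p1, p2). snd p1 \<ge> snd p2 + 1}, {(p1, p2). snd p2 \<ge> snd p1 + 1}}"

definition commonly_ordered :: "pt \<times> pt \<Rightarrow> pt \<times> pt \<Rightarrow> bool" where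
  "commonly_ordered P Q \<longleftrightarrow> (\<exists>Ord\<in>orderings. P \<in> Ord \<and> Q \<in> Ord)"

definition trajectory :: "real \<Rightarrow> (real \<Rightarrow> pt) \<Rightarrow> bool" where
  "trajectory T m \<longleftrightarrow> 0 \<le> T \<and>
     (\<forall>s\<in>{0..T}. \<forall>t\<in>{0..T}. lone (m s - m t) \<le> \<bar>s - t\<bar>) \<and>
     (\<exists>vs. vs \<noteq> [] \<and> m ` {0..T} = path_image (polyline vs))"

definition turns :: "real \<Rightarrow> (real \<Rightarrow> pt) \<Rightarrow> pt set" where
  "turns T m = {x \<in> m ` {0..T}. \<exists>a b. a \<noteq> x \<and> b \<noteq> x \<and>
       closed_segment x a \<subseteq> m ` {0..T} \<and> closed_segment x b \<subseteq> m ` {0..T} \<and>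
       fst (a - x) * snd (b - x) - snd (a - x) * fst (b - x) \<noteq> 0}"

definition feasible_schedule :: "pt set \<Rightarrow> real \<Rightarrow> (real \<Rightarrow> pt) \<Rightarrow> (real \<Rightarrow> pt) \<Rightarrow> bool" where
  "feasible_schedule S T m1 m2 \<longleftrightarrow> trajectory T m1 \<and> trajectory T m2 \<and>
     (\<forall>t\<in>{0..T}. (m1 t, m2 t) \<in> F2 S)"

definition normalizes :: "pt set \<Rightarrow> (pt \<times> pt \<Rightarrow> bool) \<Rightarrow> pt \<times> pt \<Rightarrow> real \<Rightarrow>
     (real \<Rightarrow> pt) \<Rightarrow> (real \<Rightarrow> pt) \<Rightarrow> bool" where
  "normalizes S C P T m1 m2 \<longleftrightarrow> feasible_schedule S T m1 m2 \<and>
     (m1 0, m2 0) = P \<and> C (m1 T, m2 T) \<and> commonly_ordered P (m1 T, m2 T)"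

end

theory Submission
  imports Defs
begin

text \<open>Since \<open>\<parallel>p\<^sub>1 - p\<^sub>2\<parallel>\<^sub>\<infinity> \<ge> 1\<close>, some axis direction \<open>u\<close> satisfies \<open>u \<bullet> (p\<^sub>1 - p\<^sub>2) \<ge> 1\<close>.
  Configurations are feasible exactly when both robots lie in the compact set \<open>inner S\<close> and are
  at \<open>L\<^sub>\<infinity>\<close>-distance at least 1, so any motion in which robot 1 never decreases and robot 2 never
  increases its \<open>u\<close>-coordinate stays feasible and keeps the ordering. Robot 1 moves straight along
  \<open>u\<close> and robot 2 along \<open>-u\<close> until each reaches the boundary of \<open>inner S\<close>: no turns.
  From such a boundary point \<open>h\<close> that is not a vertex, \<open>inner S\<close> is locally invariant under
  translation along some direction \<open>d\<close>, with sign chosen so that \<open>u \<bullet> d \<ge> 0\<close>. Sliding along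
  \<open>d\<close> as long as this invariance persists ends at a vertex: there, either the invariance would
  continue, or an invariance in a transversal direction would make the nearby boundary points
  interior. This adds one turn per robot.\<close>

section \<open>Feasible configurations\<close>

lemma polygonal_domain_compact:
  assumes "polygonal_domain S"
  shows "compact S"
proof -
  obtain outer holes where outer: "simple_polygon outer" and holes: "\<forall>h\<in>set holes. simple_polygon h"
    and S: "S = polygon_region outer - (\<Union>h\<in>set holes. inside (polygon_curve h))"
    using assms unfolding polygonal_domain_def by blast
  have path_polygon: "path (polyline (vs @ [hd vs]))" if "simple_polygon vs" for vs
    using that simple_path_imp_path unfolding simple_polygon_def by blast
  have "closed (polygon_region outer)" "bounded (polygon_region outer)"
    unfolding polygon_region_def polygon_curve_def
    using closed_path_image_Un_inside bounded_inside bounded_path_image path_polygon[OF outer]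
    by auto
  moreover have "open (inside (polygon_curve h))" if "h \<in> set holes" for h
    unfolding polygon_curve_def
    using holes that path_polygon by (blast intro: open_inside closed_path_image)
  ultimately show ?thesis
    unfolding S compact_eq_bounded_closed
    by (meson Diff_subset bounded_subset closed_Diff open_UN)
qed

lemma linf_le_iff: "linf v \<le> r \<longleftrightarrow> \<bar>fst v\<bar> \<le> r \<and> \<bar>snd v\<bar> \<le> r"
  unfolding linf_def by simp

lemma linf_less_iff: "linf v < r \<longleftrightarrow> \<bar>fst v\<bar> < r \<and> \<bar>snd v\<bar> < r"
  unfolding linf_def by simp

lemma linf_scaleR: "linf (c *\<^sub>R v) = \<bar>c\<bar> * linf v"
  unfolding linf_def by (simp add: abs_mult max_mult_distrib_left)

lemma interior_robot: "interior (robot p) = {q. linf (q - p) < 1/2}"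
proof -
  have "robot p = {fst p - 1/2..fst p + 1/2} \<times> {snd p - 1/2..snd p + 1/2}"
    unfolding robot_def by (auto simp: linf_le_iff abs_le_iff simp del: divide_const_simps)
  then have "interior (robot p) = {fst p - 1/2<..<fst p + 1/2} \<times> {snd p - 1/2<..<snd p + 1/2}"
    by (simp add: interior_Times)
  then show ?thesis
    by (auto simp: linf_less_iff abs_less_iff simp del: divide_const_simps)
qed

lemma inner_subset: "inner S \<subseteq> S"
  unfolding inner_def by auto

lemma closed_inner:
  assumes "closed S"
  shows "closed (inner S)"
proof -
  have "inner S = S \<inter> (\<Inter>y\<in>frontier S. {x. 1/2 \<le> linf (y - x)})"
    unfolding inner_def by auto
  moreover have "closed {x. 1/2 \<le> linf (y - x)}" for y
    unfolding linf_def by (intro closed_Collect_le continuous_intros)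
  ultimately show ?thesis
    using assms by (simp add: closed_INT closed_Int)
qed

lemma compact_inner: "compact S \<Longrightarrow> compact (inner S)"
  using closed_inner bounded_subset[OF _ inner_subset] by (auto simp: compact_eq_bounded_closed)

lemma interior_robot_subset_iff: "interior (robot p) \<subseteq> S \<longleftrightarrow> p \<in> inner S"
proof
  assume robot: "interior (robot p) \<subseteq> S"
  have "p \<in> S"
    using robot unfolding interior_robot by (auto simp: linf_def)
  moreover have "1/2 \<le> linf (y - p)" if "y \<in> frontier S" for y
  proof (rule ccontr)
    assume "\<not> 1/2 \<le> linf (y - p)"
    then have "y \<in> interior (robot p)"
      unfolding interior_robot by simp
    then have "y \<in> interior S"
      using robot by (meson interior_maximal open_interior subsetD)
    then show False
      using \<open>y \<in> frontier S\<close> by (simp add: frontier_def)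
  qed
  ultimately show "p \<in> inner S"
    unfolding inner_def by auto
next
  assume p: "p \<in> inner S"
  show "interior (robot p) \<subseteq> S"
  proof
    fix q
    assume "q \<in> interior (robot p)"
    then have q: "linf (q - p) < 1/2"
      unfolding interior_robot by auto
    show "q \<in> S"
    proof (rule ccontr)
      assume "q \<notin> S"
      then obtain y where y: "y \<in> closed_segment p q" "y \<in> frontier S"
        using connected_Int_frontier[OF connected_segment, of p q S] p inner_subset by blast
      then obtain \<mu> where "0 \<le> \<mu>" "\<mu> \<le> 1" "y - p = \<mu> *\<^sub>R (q - p)"
        unfolding closed_segment_def by (auto simp: algebra_simps)
      then have "linf (y - p) = \<mu> * linf (q - p)"
        by (simp add: linf_scaleR)
      also have "\<dots> \<le> linf (q - p)"
        using \<open>0 \<le> \<mu>\<close> \<open>\<mu> \<le> 1\<close> by (intro mult_left_le_one_le) (auto simp: linf_def)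
      finally have "linf (y - p) < 1/2"
        using q by simp
      moreover have "1/2 \<le> linf (y - p)"
        using p y(2) unfolding inner_def by blast
      ultimately show False
        by simp
    qed
  qed
qed

lemma F2_iff: "(p1, p2) \<in> F2 S \<longleftrightarrow> 1 \<le> linf (p1 - p2) \<and> p1 \<in> inner S \<and> p2 \<in> inner S"
  unfolding F2_def by (simp add: interior_robot_subset_iff)

section \<open>Moving straight to the boundary\<close>

lemma ray_parameters_bounded:
  fixes A :: "'a::real_normed_vector set"
  assumes "bounded A" "u \<noteq> 0"
  obtains R where "R > 0" "\<And>t. p + t *\<^sub>R u \<in> A \<Longrightarrow> \<bar>t\<bar> < R"
proof -
  obtain B where "B > 0" and B: "\<And>x. x \<in> A \<Longrightarrow> norm x \<le> B"
    using assms(1) bounded_pos by blast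
  define R where "R = (B + norm p) / norm u + 1"
  have "\<bar>t\<bar> < R" if "p + t *\<^sub>R u \<in> A" for t
  proof -
    have "\<bar>t\<bar> * norm u = norm (p + t *\<^sub>R u - p)"
      by simp
    also have "\<dots> \<le> B + norm p"
      using B[OF that] norm_triangle_ineq4[of "p + t *\<^sub>R u" p] by linarith
    finally have "\<bar>t\<bar> \<le> (B + norm p) / norm u"
      using assms(2) by (simp add: pos_le_divide_eq)
    then show ?thesis
      unfolding R_def by linarith
  qed
  moreover have "R > 0"
    unfolding R_def using \<open>B > 0\<close> by (smt (verit) divide_nonneg_nonneg norm_ge_zero)
  ultimately show thesis
    using that by blast
qed

lemma closed_segment_ray_subset:
  fixes A :: "'a::euclidean_space set"
  assumes "closed A" "p \<in> A" "0 \<le> t" "\<And>s. 0 \<le> s \<Longrightarrow> s < t \<Longrightarrow> p + s *\<^sub>R u \<in> A"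
  shows "closed_segment p (p + t *\<^sub>R u) \<subseteq> A"
proof (cases "p + t *\<^sub>R u = p")
  case True
  show ?thesis
    unfolding True using assms(2) by simp
next
  case False
  have "open_segment p (p + t *\<^sub>R u) \<subseteq> A"
  proof
    fix x
    assume "x \<in> open_segment p (p + t *\<^sub>R u)"
    then obtain r where r: "0 < r" "r < 1" "x = p + (r * t) *\<^sub>R u"
      unfolding in_segment by (auto simp: algebra_simps)
    moreover have "r * t < t"
      using r False assms(3) by (cases "t = 0") auto
    ultimately show "x \<in> A"
      using assms(3,4) by simp
  qed
  then have "closure (open_segment p (p + t *\<^sub>R u)) \<subseteq> A"
    using assms(1) closure_minimal by blast
  moreover have "closure (open_segment p (p + t *\<^sub>R u)) = closed_segment p (p + t *\<^sub>R u)"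
    using False by (metis closure_open_segment)
  ultimately show ?thesis
    by metis
qed

lemma ray_exit_frontier:
  fixes A :: "'a::euclidean_space set"
  assumes "compact A" "p \<in> A" "u \<noteq> 0"
  obtains t where "0 \<le> t" "closed_segment p (p + t *\<^sub>R u) \<subseteq> A" "p + t *\<^sub>R u \<in> frontier A"
proof -
  obtain R where "R > 0" and R: "\<And>t. p + t *\<^sub>R u \<in> A \<Longrightarrow> \<bar>t\<bar> < R"
    using ray_parameters_bounded[OF compact_imp_bounded[OF assms(1)] assms(3)] by blast
  define E where "E = {0..R} \<inter> (\<lambda>s. p + s *\<^sub>R u) -` (- interior A)"
  have "R \<in> E"
    using R[of R] \<open>R > 0\<close> interior_subset unfolding E_def by fastforce
  moreover have "closed E"
    unfolding E_def by (intro closed_Int closed_atLeastAtMost continuous_closed_vimage) 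
      (auto intro!: continuous_intros)
  moreover have "bdd_below E"
    unfolding E_def by (rule bdd_belowI[of _ 0]) auto
  ultimately have "Inf E \<in> E"
    using closed_contains_Inf by blast
  define t where "t = Inf E"
  have "t \<in> E"
    using \<open>Inf E \<in> E\<close> t_def by simp
  then have "0 \<le> t" and out: "p + t *\<^sub>R u \<notin> interior A"
    unfolding E_def by auto
  have "p + s *\<^sub>R u \<in> A" if "0 \<le> s" "s < t" for s
  proof -
    have "s \<notin> E"
      using cInf_lower[OF _ \<open>bdd_below E\<close>, of s] that t_def by fastforce
    then show ?thesis
      using that \<open>t \<in> E\<close> interior_subset unfolding E_def by fastforce
  qed
  then have "closed_segment p (p + t *\<^sub>R u) \<subseteq> A"
    using closed_segment_ray_subset assms compact_imp_closed \<open>0 \<le> t\<close> by metis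
  then have "p + t *\<^sub>R u \<in> frontier A"
    using out compact_imp_closed[OF assms(1)] by (auto simp: frontier_def)
  then show thesis
    using that \<open>0 \<le> t\<close> \<open>closed_segment p (p + t *\<^sub>R u) \<subseteq> A\<close> by blast
qed

lemma inner_closed_segment_ge:
  fixes a b x :: "'a::real_inner"
  assumes "w \<bullet> a \<le> w \<bullet> b" "x \<in> closed_segment a b"
  shows "w \<bullet> a \<le> w \<bullet> x"
proof -
  obtain u where "0 \<le> u" "x = (1 - u) *\<^sub>R a + u *\<^sub>R b"
    using assms(2) unfolding closed_segment_def by blast
  then have "x = a + u *\<^sub>R (b - a)"
    by (simp add: algebra_simps)
  then have "w \<bullet> x = w \<bullet> a + u * (w \<bullet> b - w \<bullet> a)"
    by (simp add: inner_add_right inner_diff_right)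
  then show ?thesis
    using assms(1) \<open>0 \<le> u\<close> by simp
qed

definition cross :: "pt \<Rightarrow> pt \<Rightarrow> real" where
  "cross a b = fst a * snd b - snd a * fst b"

lemma cross_scaleR_left [simp]: "cross (k *\<^sub>R a) b = k * cross a b"
  and cross_scaleR_right [simp]: "cross a (k *\<^sub>R b) = k * cross a b"
  and cross_self [simp]: "cross a a = 0"
  unfolding cross_def by (simp_all add: algebra_simps)

lemma cross_antisym: "cross a b = - cross b a"
  unfolding cross_def by simp

lemma cross_eq_0_imp_parallel:
  assumes "d \<noteq> 0" "cross d d' = 0"
  shows "d' = ((d \<bullet> d') / (d \<bullet> d)) *\<^sub>R d"
proof -
  have "d \<bullet> d \<noteq> 0"
    using assms(1) by simp
  moreover have "(d \<bullet> d) * fst d' = (d \<bullet> d') * fst d" "(d \<bullet> d) * snd d' = (d \<bullet> d') * snd d"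
    using assms(2) unfolding cross_def inner_prod_def inner_real_def by algebra+
  ultimately show ?thesis
    by (simp add: prod_eq_iff field_simps)
qed

lemma cross_eq_0_trans:
  assumes "w \<noteq> 0" "cross p w = 0" "cross q w = 0"
  shows "cross p q = 0"
proof -
  obtain k l where "p = k *\<^sub>R w" "q = l *\<^sub>R w"
    using cross_eq_0_imp_parallel[OF assms(1)] assms(2,3) cross_antisym by (metis neg_equal_0_iff_equal)
  then show ?thesis
    by simp
qed

lemma cross_decomposition:
  assumes "cross d d' \<noteq> 0"
  shows "x = (cross x d' / cross d d') *\<^sub>R d + (cross d x / cross d d') *\<^sub>R d'"
proof -
  have "cross d d' *\<^sub>R x = cross x d' *\<^sub>R d + cross d x *\<^sub>R d'"
    unfolding cross_def by (simp add: prod_eq_iff algebra_simps)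
  then have "x = inverse (cross d d') *\<^sub>R (cross x d' *\<^sub>R d + cross d x *\<^sub>R d')"
    using assms by (metis scaleR_scaleR left_inverse scaleR_one)
  then show ?thesis
    by (simp add: scaleR_add_right divide_inverse_commute)
qed

section \<open>Sliding along the boundary to a vertex\<close>

definition invariant_near :: "pt set \<Rightarrow> pt \<Rightarrow> real \<Rightarrow> pt \<Rightarrow> bool" where
  "invariant_near A x e d \<longleftrightarrow>
     (\<forall>y\<in>ball x e. \<forall>z\<in>ball x e. \<forall>t. z = y + t *\<^sub>R d \<longrightarrow> (y \<in> A \<longleftrightarrow> z \<in> A))"

lemma is_vertex_iff_not_invariant_near:
  "is_vertex A x \<longleftrightarrow> x \<in> frontier A \<and> \<not> (\<exists>e>0. \<exists>d. d \<noteq> 0 \<and> invariant_near A x e d)"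
  unfolding is_vertex_def invariant_near_def by blast

lemma invariant_nearD:
  assumes "invariant_near A x e d" "y \<in> ball x e" "y + t *\<^sub>R d \<in> ball x e"
  shows "y \<in> A \<longleftrightarrow> y + t *\<^sub>R d \<in> A"
  using assms unfolding invariant_near_def by blast

lemma invariant_near_subset:
  "invariant_near A x e d \<Longrightarrow> ball y r \<subseteq> ball x e \<Longrightarrow> invariant_near A y r d"
  unfolding invariant_near_def by blast

lemma invariant_near_scaleR: "invariant_near A x e d \<Longrightarrow> invariant_near A x e (k *\<^sub>R d)"
  unfolding invariant_near_def by (metis scaleR_scaleR)

lemma invariant_near_frontier_shift:
  assumes "closed A" "invariant_near A v e d" "v \<in> frontier A" "dist v (v + \<tau> *\<^sub>R d) < e/2"
  shows "v + \<tau> *\<^sub>R d \<in> frontier A"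
proof -
  define w where "w = v + \<tau> *\<^sub>R d"
  have "v \<in> A"
    using assms(1,3) frontier_subset_closed by blast
  have "e > 0"
    using assms(4) zero_le_dist[of v "v + \<tau> *\<^sub>R d"] by linarith
  then have "w \<in> A"
    using assms(2,4) \<open>v \<in> A\<close> unfolding invariant_near_def w_def by fastforce
  moreover have "w \<notin> interior A"
  proof
    assume "w \<in> interior A"
    then obtain r where "r > 0" "ball w r \<subseteq> A"
      using mem_interior by blast
    have "ball v (min r (e/2)) \<subseteq> A"
    proof
      fix q
      assume q: "q \<in> ball v (min r (e/2))"
      have "dist w (q + \<tau> *\<^sub>R d) = dist v q"
        unfolding w_def dist_norm by (simp add: algebra_simps)
      then have "q + \<tau> *\<^sub>R d \<in> A" "q + \<tau> *\<^sub>R d \<in> ball v e"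
        using q \<open>ball w r \<subseteq> A\<close> assms(4) dist_triangle[of v "q + \<tau> *\<^sub>R d" w]
        unfolding w_def by auto
      moreover have "q \<in> ball v e"
        using q subset_ball[of "min r (e/2)" e v] \<open>e > 0\<close> by auto
      ultimately show "q \<in> A"
        using invariant_nearD[OF assms(2)] by blast
    qed
    then have "ball v (min r (e/2)) \<subseteq> interior A"
      by (simp add: interior_maximal)
    then have "v \<in> interior A"
      using \<open>r > 0\<close> \<open>e > 0\<close> centre_in_ball[of v "min r (e/2)"] by auto
    then show False
      using assms(3) by (simp add: frontier_def)
  qed
  ultimately show ?thesis
    using assms(1) unfolding w_def by (simp add: frontier_def)
qed

text \<open>Every point near \<open>w\<close> is reached from \<open>w\<close> by a short step along \<open>d\<close> followed by a step
  along \<open>d'\<close>; the length of the first step is a continuous linear coordinate.\<close>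
lemma interior_if_invariant_near_transversal:
  assumes "w \<in> A" "e > 0" "invariant_near A w e d" "invariant_near A w e d'" "cross d d' \<noteq> 0"
  shows "w \<in> interior A"
proof -
  define \<alpha> where "\<alpha> z = cross (z - w) d' / cross d d'" for z
  have "continuous (at w) (\<lambda>z. w + \<alpha> z *\<^sub>R d)"
    using assms(5) unfolding \<alpha>_def cross_def by (intro continuous_intros) auto
  moreover have "\<alpha> w = 0"
    unfolding \<alpha>_def cross_def by simp
  ultimately obtain \<rho> where "\<rho> > 0" and \<rho>: "(\<lambda>z. w + \<alpha> z *\<^sub>R d) ` ball w \<rho> \<subseteq> ball w e"
    using \<open>e > 0\<close> unfolding continuous_at_ball by fastforce
  have "ball w (min \<rho> e) \<subseteq> A"
  proof
    fix z
    assume z: "z \<in> ball w (min \<rho> e)"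
    define y where "y = w + \<alpha> z *\<^sub>R d"
    have "z \<in> ball w \<rho>"
      using z by simp
    then have "y \<in> ball w e"
      using \<rho> unfolding y_def by blast
    then have "y \<in> A"
      using invariant_nearD[OF assms(3), of w] assms(1,2) unfolding y_def by simp
    moreover have "z = y + (cross d (z - w) / cross d d') *\<^sub>R d'"
      using cross_decomposition[OF assms(5), of "z - w"] unfolding y_def \<alpha>_def
      by (simp add: algebra_simps)
    moreover have "z \<in> ball w e"
      using z by simp
    ultimately show "z \<in> A"
      using invariant_nearD[OF assms(4) \<open>y \<in> ball w e\<close>] by metis
  qed
  then have "ball w (min \<rho> e) \<subseteq> interior A"
    by (simp add: interior_maximal)
  then show ?thesis
    using \<open>\<rho> > 0\<close> \<open>e > 0\<close> centre_in_ball[of w "min \<rho> e"] by auto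
qed

definition flat_frontier_point :: "pt set \<Rightarrow> pt \<Rightarrow> pt \<Rightarrow> bool" where
  "flat_frontier_point A d x \<longleftrightarrow> x \<in> frontier A \<and> (\<exists>e>0. invariant_near A x e d)"

lemma flat_frontier_point_shift:
  assumes "closed A" "flat_frontier_point A d v"
  obtains \<epsilon> where "\<epsilon> > 0" "\<And>\<tau>. \<bar>\<tau>\<bar> < \<epsilon> \<Longrightarrow> flat_frontier_point A d (v + \<tau> *\<^sub>R d)"
proof -
  obtain e where "e > 0" and inv: "invariant_near A v e d" and "v \<in> frontier A"
    using assms(2) unfolding flat_frontier_point_def by blast
  define \<epsilon> where "\<epsilon> = e / (2 * (norm d + 1))"
  have "norm d + 1 > 0"
    by (simp add: add_nonneg_pos)
  have "flat_frontier_point A d (v + \<tau> *\<^sub>R d)" if "\<bar>\<tau>\<bar> < \<epsilon>" for \<tau>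
  proof -
    have "\<bar>\<tau>\<bar> * norm d \<le> \<bar>\<tau>\<bar> * (norm d + 1)"
      by (simp add: mult_left_mono)
    also have "\<dots> < \<epsilon> * (norm d + 1)"
      using that \<open>norm d + 1 > 0\<close> by (intro mult_strict_right_mono) auto
    also have "\<dots> = e/2"
      unfolding \<epsilon>_def using \<open>norm d + 1 > 0\<close> by (simp add: field_simps)
    finally have "dist v (v + \<tau> *\<^sub>R d) < e/2"
      by (simp add: dist_norm)
    then have "ball (v + \<tau> *\<^sub>R d) (e/2) \<subseteq> ball v e"
      by (simp add: ball_subset_ball_iff dist_commute)
    then show ?thesis
      unfolding flat_frontier_point_def
      using invariant_near_frontier_shift[OF assms(1) inv \<open>v \<in> frontier A\<close>]
        \<open>dist v (v + \<tau> *\<^sub>R d) < e/2\<close> invariant_near_subset[OF inv] \<open>e > 0\<close>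
      by (meson half_gt_zero)
  qed
  moreover have "\<epsilon> > 0"
    unfolding \<epsilon>_def using \<open>e > 0\<close> \<open>norm d + 1 > 0\<close> by simp
  ultimately show thesis
    using that by blast
qed

text \<open>If the direction of local invariance at \<open>v\<close> is parallel to \<open>d\<close>, then \<open>v\<close> is flat along \<open>d\<close>;
  otherwise no nearby point can be, since two transversal invariances would put it into the
  interior.\<close>
lemma flat_or_isolated_if_not_vertex:
  assumes "closed A" "v \<in> frontier A" "\<not> is_vertex A v"
  shows "flat_frontier_point A d v \<or> (\<exists>e>0. \<forall>w\<in>ball v e. \<not> flat_frontier_point A d w)"
proof -
  obtain e' d' where "e' > 0" "d' \<noteq> 0" and inv': "invariant_near A v e' d'"
    using assms(2,3) unfolding is_vertex_iff_not_invariant_near by blast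
  show ?thesis
  proof (cases "cross d' d = 0")
    case True
    then have "invariant_near A v e' d"
      using invariant_near_scaleR[OF inv'] cross_eq_0_imp_parallel[OF \<open>d' \<noteq> 0\<close>] by metis
    then show ?thesis
      using assms(2) \<open>e' > 0\<close> unfolding flat_frontier_point_def by blast
  next
    case False
    have "\<not> flat_frontier_point A d w" if "w \<in> ball v (e'/2)" for w
    proof
      assume "flat_frontier_point A d w"
      then obtain e1 where "e1 > 0" "w \<in> frontier A" and inv: "invariant_near A w e1 d"
        unfolding flat_frontier_point_def by blast
      define e2 where "e2 = min e1 (e'/2)"
      have "ball w e2 \<subseteq> ball v e'"
      proof
        fix x
        assume "x \<in> ball w e2"
        then have "dist w x < e'/2"
          unfolding e2_def by simp
        then show "x \<in> ball v e'"
          using that dist_triangle[of v x w] by simp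
      qed
      moreover have "ball w e2 \<subseteq> ball w e1"
        unfolding e2_def by (simp add: subset_ball)
      moreover have "cross d d' \<noteq> 0"
        using False unfolding cross_def by argo
      moreover have "w \<in> A"
        using \<open>w \<in> frontier A\<close> assms(1) frontier_subset_closed by blast
      moreover have "e2 > 0"
        unfolding e2_def using \<open>e1 > 0\<close> \<open>e' > 0\<close> by simp
      ultimately have "w \<in> interior A"
        using interior_if_invariant_near_transversal invariant_near_subset inv inv' by metis
      then show False
        using \<open>w \<in> frontier A\<close> by (simp add: frontier_def)
    qed
    then show ?thesis
      using \<open>e' > 0\<close> by (meson half_gt_zero)
  qed
qed

lemma is_vertex_at_end_of_flat_run:
  assumes "closed A" "d \<noteq> 0" "0 \<le> T" "h + T *\<^sub>R d \<in> frontier A"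
    and flat_start: "flat_frontier_point A d h"
    and flat_before: "\<And>s. 0 \<le> s \<Longrightarrow> s < T \<Longrightarrow> flat_frontier_point A d (h + s *\<^sub>R d)"
    and maximal: "\<And>\<epsilon>. \<epsilon> > 0 \<Longrightarrow> \<exists>s. T \<le> s \<and> s < T + \<epsilon> \<and> \<not> flat_frontier_point A d (h + s *\<^sub>R d)"
  shows "is_vertex A (h + T *\<^sub>R d)"
proof (rule ccontr)
  define v where "v = h + T *\<^sub>R d"
  assume "\<not> is_vertex A (h + T *\<^sub>R d)"
  then consider "flat_frontier_point A d v" | e where "e > 0" "\<And>w. w \<in> ball v e \<Longrightarrow> \<not> flat_frontier_point A d w"
    using flat_or_isolated_if_not_vertex[OF assms(1,4)] unfolding v_def by blast
  then show False
  proof cases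
    case 1
    then obtain \<epsilon> where "\<epsilon> > 0" and \<epsilon>: "\<And>\<tau>. \<bar>\<tau>\<bar> < \<epsilon> \<Longrightarrow> flat_frontier_point A d (v + \<tau> *\<^sub>R d)"
      using flat_frontier_point_shift[OF assms(1)] by blast
    obtain s where "T \<le> s" "s < T + \<epsilon>" "\<not> flat_frontier_point A d (h + s *\<^sub>R d)"
      using maximal[OF \<open>\<epsilon> > 0\<close>] by blast
    moreover have "h + s *\<^sub>R d = v + (s - T) *\<^sub>R d"
      unfolding v_def by (simp add: algebra_simps)
    ultimately show False
      using \<epsilon>[of "s - T"] by simp
  next
    case 2
    define s where "s = max 0 (T - e / (2 * norm d))"
    have "s \<le> T"
      using assms(3) \<open>e > 0\<close> unfolding s_def by simp
    have "flat_frontier_point A d (h + s *\<^sub>R d)"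
      using flat_start flat_before[of s] assms(2,3) \<open>e > 0\<close> unfolding s_def by (cases "T = 0") auto
    moreover have "v - (h + s *\<^sub>R d) = (T - s) *\<^sub>R d"
      unfolding v_def by (simp add: algebra_simps)
    then have "dist v (h + s *\<^sub>R d) = (T - s) * norm d"
      using \<open>s \<le> T\<close> by (simp add: dist_norm)
    moreover have "(T - s) * norm d < e"
      using assms(2) \<open>e > 0\<close> unfolding s_def by (auto simp: field_simps max_def)
    ultimately show False
      using 2 by simp
  qed
qed

lemma vertex_reachable_from_frontier:
  assumes "compact A" "h \<in> frontier A"
  obtains c where "closed_segment h c \<subseteq> A" "is_vertex A c" "w \<bullet> h \<le> w \<bullet> c"
proof (cases "is_vertex A h")
  case True
  then show thesis
    using that[of h] assms frontier_subset_closed compact_imp_closed by fastforce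
next
  case False
  have "closed A"
    using assms(1) compact_imp_closed by blast
  obtain e d0 where "e > 0" "d0 \<noteq> 0" and inv: "invariant_near A h e d0"
    using False assms(2) unfolding is_vertex_iff_not_invariant_near by blast
  define d where "d = (if 0 \<le> w \<bullet> d0 then d0 else - d0)"
  have "d \<noteq> 0" "0 \<le> w \<bullet> d"
    using \<open>d0 \<noteq> 0\<close> unfolding d_def by auto
  have flat_h: "flat_frontier_point A d h"
    using invariant_near_scaleR[OF inv, of "-1"] inv \<open>e > 0\<close> assms(2)
    unfolding flat_frontier_point_def d_def by auto
  obtain R where R: "\<And>t. h + t *\<^sub>R d \<in> A \<Longrightarrow> \<bar>t\<bar> < R"
    using ray_parameters_bounded[OF compact_imp_bounded[OF assms(1)] \<open>d \<noteq> 0\<close>] by blast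
  define L where "L = {t. 0 \<le> t \<and> (\<forall>s\<in>{0..t}. flat_frontier_point A d (h + s *\<^sub>R d))}"
  define T where "T = Sup L"
  have "0 \<in> L"
    using flat_h unfolding L_def by simp
  have "bdd_above L"
  proof (rule bdd_aboveI)
    fix t
    assume "t \<in> L"
    then have "h + t *\<^sub>R d \<in> A"
      using \<open>closed A\<close> frontier_subset_closed unfolding L_def flat_frontier_point_def by fastforce
    then show "t \<le> R"
      using R by fastforce
  qed
  have "0 \<le> T"
    using cSup_upper[OF \<open>0 \<in> L\<close> \<open>bdd_above L\<close>] unfolding T_def .
  have flat_before: "flat_frontier_point A d (h + s *\<^sub>R d)" if "0 \<le> s" "s < T" for s
    using less_cSupD[of L s] \<open>0 \<in> L\<close> that unfolding T_def L_def by force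
  have "closed_segment h (h + T *\<^sub>R d) \<subseteq> frontier A"
    using closed_segment_ray_subset[OF frontier_closed assms(2) \<open>0 \<le> T\<close>] flat_before
    unfolding flat_frontier_point_def by blast
  then have "h + T *\<^sub>R d \<in> frontier A"
    by auto
  moreover have "\<exists>s. T \<le> s \<and> s < T + \<epsilon> \<and> \<not> flat_frontier_point A d (h + s *\<^sub>R d)" if "\<epsilon> > 0" for \<epsilon>
  proof (rule ccontr)
    assume flat_after: "\<not> ?thesis"
    have "flat_frontier_point A d (h + s *\<^sub>R d)" if "0 \<le> s" "s \<le> T + \<epsilon>/2" for s
      using flat_before[of s] flat_after \<open>\<epsilon> > 0\<close> that by (cases "s < T") auto
    then have "T + \<epsilon>/2 \<in> L"
      using \<open>0 \<le> T\<close> \<open>\<epsilon> > 0\<close> unfolding L_def by simp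
    then show False
      using cSup_upper[OF _ \<open>bdd_above L\<close>] \<open>\<epsilon> > 0\<close> unfolding T_def by fastforce
  qed
  ultimately have "is_vertex A (h + T *\<^sub>R d)"
    using is_vertex_at_end_of_flat_run[OF \<open>closed A\<close> \<open>d \<noteq> 0\<close> \<open>0 \<le> T\<close>] flat_h flat_before by blast
  moreover have "w \<bullet> h \<le> w \<bullet> (h + T *\<^sub>R d)"
    using \<open>0 \<le> T\<close> \<open>0 \<le> w \<bullet> d\<close> by (simp add: inner_add_right)
  ultimately show thesis
    using that \<open>closed_segment h (h + T *\<^sub>R d) \<subseteq> frontier A\<close> \<open>closed A\<close> frontier_subset_closed by blast
qed

lemma monotone_path_to_vertex:
  assumes "compact A" "p \<in> A" "w \<noteq> 0"
  obtains h c where "h \<in> frontier A" "is_vertex A c"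
    "closed_segment p h \<union> closed_segment h c \<subseteq> A"
    "\<And>x. x \<in> closed_segment p h \<union> closed_segment h c \<Longrightarrow> w \<bullet> p \<le> w \<bullet> x"
proof -
  obtain t where "0 \<le> t" and ray: "closed_segment p (p + t *\<^sub>R w) \<subseteq> A" and h: "p + t *\<^sub>R w \<in> frontier A"
    using ray_exit_frontier[OF assms] by blast
  obtain c where leg: "closed_segment (p + t *\<^sub>R w) c \<subseteq> A" and "is_vertex A c"
    and "w \<bullet> (p + t *\<^sub>R w) \<le> w \<bullet> c"
    using vertex_reachable_from_frontier[OF assms(1) h] by blast
  moreover have "w \<bullet> p \<le> w \<bullet> (p + t *\<^sub>R w)"
    using \<open>0 \<le> t\<close> by (simp add: inner_add_right)
  ultimately have "w \<bullet> p \<le> w \<bullet> x" if "x \<in> closed_segment p (p + t *\<^sub>R w) \<union> closed_segment (p + t *\<^sub>R w) c" for x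
    using that inner_closed_segment_ge[of w] order_trans by blast
  then show thesis
    using that[OF h \<open>is_vertex A c\<close>] ray leg by blast
qed

section \<open>Two-leg motions\<close>

lemma lone_add_le: "lone (x + y) \<le> lone x + lone y"
  unfolding lone_def by (simp add: abs_triangle_ineq add_mono)

lemma lone_scaleR: "lone (c *\<^sub>R x) = \<bar>c\<bar> * lone x"
  unfolding lone_def by (simp add: abs_mult distrib_left)

lemma lone_nonneg: "0 \<le> lone x"
  unfolding lone_def by simp

lemma lone_minus_commute: "lone (x - y) = lone (y - x)"
  unfolding lone_def by (simp add: abs_minus_commute)

lemma polyline3_eq:
  "polyline [a, b, c] s = (if s \<le> 1/2 then a + (2 * s) *\<^sub>R (b - a) else b + (2 * s - 1) *\<^sub>R (c - b))"
  by (simp add: joinpaths_def linepath_def algebra_simps)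

lemma polyline3_lone_lipschitz:
  assumes "0 \<le> s" "s \<le> t" "t \<le> 1"
  shows "lone (polyline [a, b, c] t - polyline [a, b, c] s) \<le> 2 * (lone (b - a) + lone (c - b)) * (t - s)"
proof -
  define \<gamma> where "\<gamma> = polyline [a, b, c]"
  have \<gamma>: "\<gamma> r = (if r \<le> 1/2 then a + (2 * r) *\<^sub>R (b - a) else b + (2 * r - 1) *\<^sub>R (c - b))" for r
    unfolding \<gamma>_def by (rule polyline3_eq)
  have "lone (\<gamma> t - \<gamma> s) \<le> 2 * (t - s) * lone (b - a) + 2 * (t - s) * lone (c - b)"
  proof -
    consider "t \<le> 1/2" | "1/2 < s" | "s \<le> 1/2" "1/2 < t"
      by linarith
    then show ?thesis
    proof cases
      case 1
      then have "\<gamma> t - \<gamma> s = (2 * (t - s)) *\<^sub>R (b - a)"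
        using assms by (simp add: \<gamma> algebra_simps)
      then show ?thesis
        using assms by (simp add: lone_scaleR lone_nonneg)
    next
      case 2
      then have "\<gamma> t - \<gamma> s = (2 * (t - s)) *\<^sub>R (c - b)"
        using assms by (simp add: \<gamma> algebra_simps)
      then show ?thesis
        using assms by (simp add: lone_scaleR lone_nonneg)
    next
      case 3
      then have "\<gamma> t - \<gamma> s = (1 - 2 * s) *\<^sub>R (b - a) + (2 * t - 1) *\<^sub>R (c - b)"
        by (simp add: \<gamma> algebra_simps)
      then have "lone (\<gamma> t - \<gamma> s) \<le> (1 - 2 * s) * lone (b - a) + (2 * t - 1) * lone (c - b)"
        using 3 lone_add_le[of "(1 - 2 * s) *\<^sub>R (b - a)" "(2 * t - 1) *\<^sub>R (c - b)"]
        by (simp add: lone_scaleR)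
      also have "\<dots> \<le> 2 * (t - s) * lone (b - a) + 2 * (t - s) * lone (c - b)"
        using 3 by (intro add_mono mult_right_mono) (auto simp: lone_nonneg)
      finally show ?thesis .
    qed
  qed
  then show ?thesis
    unfolding \<gamma>_def by (simp add: algebra_simps)
qed

definition two_leg_motion :: "real \<Rightarrow> pt \<Rightarrow> pt \<Rightarrow> pt \<Rightarrow> real \<Rightarrow> pt" where
  "two_leg_motion T a b c t = polyline [a, b, c] (t / T)"

lemma two_leg_motion_start: "two_leg_motion T a b c 0 = a"
  by (simp add: two_leg_motion_def polyline3_eq del: polyline.simps)

lemma two_leg_motion_end: "T \<noteq> 0 \<Longrightarrow> two_leg_motion T a b c T = c"
  by (simp add: two_leg_motion_def polyline3_eq del: polyline.simps)

lemma two_leg_motion_image: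
  assumes "T > 0"
  shows "two_leg_motion T a b c ` {0..T} = closed_segment a b \<union> closed_segment b c"
proof -
  have "(\<lambda>t. t / T) ` {0..T} = {0..1}"
    using assms by (auto simp: image_iff field_simps intro!: bexI[of _ "_ * T"])
  then have "two_leg_motion T a b c ` {0..T} = path_image (polyline [a, b, c])"
    unfolding two_leg_motion_def path_image_def by (metis image_image)
  then show ?thesis
    by (simp add: path_image_join)
qed

lemma two_leg_motion_trajectory:
  assumes "T > 0" "2 * (lone (b - a) + lone (c - b)) \<le> T"
  shows "trajectory T (two_leg_motion T a b c)"
proof -
  have "lone (two_leg_motion T a b c t - two_leg_motion T a b c s) \<le> t - s"
    if "0 \<le> s" "s \<le> t" "t \<le> T" for s t
  proof -
    have "lone (two_leg_motion T a b c t - two_leg_motion T a b c s) \<le> 2 * (lone (b - a) + lone (c - b)) * (t / T - s / T)"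
      unfolding two_leg_motion_def using that assms(1)
      by (intro polyline3_lone_lipschitz) (auto simp: divide_right_mono)
    also have "\<dots> \<le> T * (t / T - s / T)"
      using that assms by (intro mult_right_mono) (auto simp: divide_right_mono)
    also have "\<dots> = t - s"
      using assms(1) by (simp add: field_simps)
    finally show ?thesis .
  qed
  then have "lone (two_leg_motion T a b c s - two_leg_motion T a b c t) \<le> \<bar>s - t\<bar>"
    if "s \<in> {0..T}" "t \<in> {0..T}" for s t
    using that lone_minus_commute by (cases "s \<le> t") (fastforce simp: abs_if)+
  then show ?thesis
    unfolding trajectory_def using assms two_leg_motion_image[OF assms(1)]
    by (auto intro!: exI[of _ "[a, b, c]"] simp: path_image_join)
qed

section \<open>Turns\<close>

lemma closed_segment_diff_end:
  assumes "x \<in> closed_segment a b"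
  obtains \<kappa> where "x - b = \<kappa> *\<^sub>R (a - b)"
proof -
  obtain u where "x = (1 - u) *\<^sub>R a + u *\<^sub>R b"
    using assms unfolding closed_segment_def by blast
  then have "x - b = (1 - u) *\<^sub>R (a - b)"
    by (simp add: algebra_simps)
  then show thesis
    by (rule that)
qed

text \<open>A transversal segment would have its far end \<open>y\<close> and its midpoint \<open>m\<close> on the second leg,
  which puts \<open>x = 2 m - y\<close> on the line through \<open>[b, c]\<close>; as the two lines meet only at \<open>b\<close>,
  this is impossible.\<close>
lemma segment_in_legs_parallel_to_first_leg:
  assumes x: "x \<in> closed_segment a b" "x \<noteq> b"
    and y: "closed_segment x y \<subseteq> closed_segment a b \<union> closed_segment b c"
  shows "cross (y - x) (b - a) = 0"
proof (rule ccontr)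
  assume transversal: "cross (y - x) (b - a) \<noteq> 0"
  obtain \<kappa> where \<kappa>: "x - b = \<kappa> *\<^sub>R (a - b)"
    using closed_segment_diff_end[OF x(1)] by blast
  have off_first_leg: "q \<in> closed_segment b c" if "q \<in> closed_segment x y" "cross (q - x) (b - a) \<noteq> 0" for q
  proof -
    have "q \<notin> closed_segment a b"
    proof
      assume "q \<in> closed_segment a b"
      then obtain \<mu> where "q - b = \<mu> *\<^sub>R (a - b)"
        using closed_segment_diff_end by blast
      moreover have "q - x = (q - b) - (x - b)"
        by simp
      ultimately have "q - x = (\<mu> - \<kappa>) *\<^sub>R (a - b)"
        using \<kappa> by (simp add: scaleR_diff_left)
      moreover have "cross (a - b) (b - a) = 0"
        unfolding cross_def by (simp add: algebra_simps)
      ultimately show False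
        using that(2) by simp
    qed
    then show ?thesis
      using that(1) y by blast
  qed
  define m where "m = midpoint x y"
  have "cross (m - x) (b - a) = cross (y - x) (b - a) / 2"
    unfolding m_def midpoint_def cross_def by (simp add: field_simps)
  then have "m \<in> closed_segment b c" "y \<in> closed_segment b c"
    using off_first_leg[of m] off_first_leg[of y] transversal
    unfolding m_def by (auto simp: midpoint_in_closed_segment)
  then obtain \<nu> \<rho> where \<nu>: "y - b = \<nu> *\<^sub>R (c - b)" and \<rho>: "m - b = \<rho> *\<^sub>R (c - b)"
    using closed_segment_diff_end[of _ c b] by (metis closed_segment_commute)
  have "x - b = 2 *\<^sub>R (m - b) - (y - b)"
    unfolding m_def midpoint_def by (simp add: algebra_simps scaleR_2)
  then have x_on_second_line: "x - b = (2 * \<rho> - \<nu>) *\<^sub>R (c - b)"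
    unfolding \<nu> \<rho> by (simp add: algebra_simps)
  have "cross (x - b) (b - a) = 0"
    unfolding \<kappa> cross_def by (simp add: algebra_simps)
  then have "(2 * \<rho> - \<nu>) * cross (c - b) (b - a) = 0"
    unfolding x_on_second_line by simp
  moreover have "y - x = (y - b) - (x - b)"
    by simp
  then have "y - x = (2 * \<nu> - 2 * \<rho>) *\<^sub>R (c - b)"
    unfolding \<nu> x_on_second_line scaleR_left_diff_distrib[symmetric] by argo
  ultimately have "x - b = 0"
    using transversal x_on_second_line by auto
  then show False
    using x(2) by simp
qed

lemma turns_two_legs:
  assumes img: "m ` {0..T} = closed_segment a b \<union> closed_segment b c"
  shows "turns T m \<subseteq> {b}"
proof
  fix x
  assume "x \<in> turns T m"
  then obtain y z where x: "x \<in> closed_segment a b \<union> closed_segment b c"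
    and y: "closed_segment x y \<subseteq> closed_segment a b \<union> closed_segment b c"
    and z: "closed_segment x z \<subseteq> closed_segment a b \<union> closed_segment b c"
    and turn: "cross (y - x) (z - x) \<noteq> 0"
    unfolding turns_def img cross_def by blast
  show "x \<in> {b}"
  proof (rule ccontr)
    assume "x \<notin> {b}"
    consider "x \<in> closed_segment a b" | "x \<in> closed_segment c b"
      using x closed_segment_commute by blast
    then show False
    proof cases
      case 1
      then have "b - a \<noteq> 0"
        using \<open>x \<notin> {b}\<close> by auto
      then show False
        using segment_in_legs_parallel_to_first_leg[OF 1] y z turn \<open>x \<notin> {b}\<close> cross_eq_0_trans by blast
    next
      case 2
      have legs: "closed_segment a b \<union> closed_segment b c = closed_segment c b \<union> closed_segment b a"
        by (auto simp: closed_segment_commute)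
      have "b - c \<noteq> 0"
        using 2 \<open>x \<notin> {b}\<close> by auto
      then show False
        using segment_in_legs_parallel_to_first_leg[OF 2] y z turn \<open>x \<notin> {b}\<close> cross_eq_0_trans
        unfolding legs by blast
    qed
  qed
qed

lemma turns_segment:
  assumes "m ` {0..T} = closed_segment a b"
  shows "turns T m = {}"
proof -
  have "m ` {0..T} = closed_segment a b \<union> closed_segment b b"
    "m ` {0..T} = closed_segment b a \<union> closed_segment a a"
    using assms by (auto simp: closed_segment_commute)
  then have "turns T m \<subseteq> {b} \<inter> {a}"
    using turns_two_legs by blast
  moreover have "turns T m \<subseteq> {}" if "a = b"
    using assms that unfolding turns_def by auto
  ultimately show ?thesis
    by blast
qed

section \<open>Schedules separated along an axis\<close>

definition axis_directions :: "pt set" where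
  "axis_directions = {(1, 0), (-1, 0), (0, 1), (0, -1)}"

lemma axis_direction_nonzero: "u \<in> axis_directions \<Longrightarrow> u \<noteq> 0"
  unfolding axis_directions_def by (auto simp: prod_eq_iff)

lemma axis_direction_exists:
  assumes "1 \<le> linf v"
  obtains u where "u \<in> axis_directions" "1 \<le> u \<bullet> v"
proof -
  have "1 \<le> (1, 0) \<bullet> v \<or> 1 \<le> (-1, 0) \<bullet> v \<or> 1 \<le> (0, 1) \<bullet> v \<or> 1 \<le> (0, -1) \<bullet> v"
    using assms unfolding linf_def inner_prod_def by (auto simp: le_max_iff_disj abs_if split: if_splits)
  then show thesis
    using that unfolding axis_directions_def by blast
qed

lemma linf_ge_if_axis_direction: "u \<in> axis_directions \<Longrightarrow> 1 \<le> u \<bullet> v \<Longrightarrow> 1 \<le> linf v"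
  unfolding axis_directions_def linf_def inner_prod_def by auto

lemma axis_direction_ordering:
  "u \<in> axis_directions \<Longrightarrow> {(q1, q2). 1 \<le> u \<bullet> (q1 - q2)} \<in> orderings"
  unfolding axis_directions_def orderings_def inner_prod_def by (auto simp: algebra_simps)

lemma F2_if_axis_separated:
  "u \<in> axis_directions \<Longrightarrow> p1 \<in> inner S \<Longrightarrow> p2 \<in> inner S \<Longrightarrow> 1 \<le> u \<bullet> (p1 - p2) \<Longrightarrow> (p1, p2) \<in> F2 S"
  by (simp add: F2_iff linf_ge_if_axis_direction)

lemma commonly_ordered_if_axis_separated:
  "u \<in> axis_directions \<Longrightarrow> 1 \<le> u \<bullet> (p1 - p2) \<Longrightarrow> 1 \<le> u \<bullet> (q1 - q2) \<Longrightarrow>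
    commonly_ordered (p1, p2) (q1, q2)"
  unfolding commonly_ordered_def by (rule bexI[OF _ axis_direction_ordering]) auto

lemma normalizes_by_two_leg_motions:
  assumes "u \<in> axis_directions"
    and legs1: "closed_segment a1 b1 \<union> closed_segment b1 c1 \<subseteq> inner S"
    and legs2: "closed_segment a2 b2 \<union> closed_segment b2 c2 \<subseteq> inner S"
    and sep: "\<And>x1 x2. x1 \<in> closed_segment a1 b1 \<union> closed_segment b1 c1 \<Longrightarrow>
      x2 \<in> closed_segment a2 b2 \<union> closed_segment b2 c2 \<Longrightarrow> 1 \<le> u \<bullet> (x1 - x2)"
    and "(c1, c2) \<in> F2 S \<Longrightarrow> C (c1, c2)"
  obtains T m1 m2 where "normalizes S C (a1, a2) T m1 m2"
    "m1 ` {0..T} = closed_segment a1 b1 \<union> closed_segment b1 c1"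
    "m2 ` {0..T} = closed_segment a2 b2 \<union> closed_segment b2 c2"
proof -
  define T where "T = 2 * (lone (b1 - a1) + lone (c1 - b1)) + 2 * (lone (b2 - a2) + lone (c2 - b2)) + 1"
  define m1 where "m1 = two_leg_motion T a1 b1 c1"
  define m2 where "m2 = two_leg_motion T a2 b2 c2"
  have "T > 0" "2 * (lone (b1 - a1) + lone (c1 - b1)) \<le> T" "2 * (lone (b2 - a2) + lone (c2 - b2)) \<le> T"
    unfolding T_def using lone_nonneg[of "b1 - a1"] lone_nonneg[of "c1 - b1"] lone_nonneg[of "b2 - a2"]
      lone_nonneg[of "c2 - b2"] by auto
  then have traj: "trajectory T m1" "trajectory T m2"
    and img: "m1 ` {0..T} = closed_segment a1 b1 \<union> closed_segment b1 c1"
      "m2 ` {0..T} = closed_segment a2 b2 \<union> closed_segment b2 c2"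
    unfolding m1_def m2_def by (simp_all add: two_leg_motion_trajectory two_leg_motion_image)
  have feasible: "(m1 t, m2 t) \<in> F2 S" if "t \<in> {0..T}" for t
  proof -
    have "m1 t \<in> closed_segment a1 b1 \<union> closed_segment b1 c1" "m2 t \<in> closed_segment a2 b2 \<union> closed_segment b2 c2"
      using img that by blast+
    then show ?thesis
      using legs1 legs2 by (intro F2_if_axis_separated[OF assms(1)] sep) auto
  qed
  moreover have "(m1 0, m2 0) = (a1, a2)" "(m1 T, m2 T) = (c1, c2)"
    unfolding m1_def m2_def using \<open>T > 0\<close> by (simp_all add: two_leg_motion_start two_leg_motion_end)
  moreover have "commonly_ordered (a1, a2) (c1, c2)"
    by (intro commonly_ordered_if_axis_separated[OF assms(1)] sep) auto
  moreover have "C (c1, c2)"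
    using feasible[of T] \<open>(m1 T, m2 T) = (c1, c2)\<close> \<open>T > 0\<close> assms(5) by simp
  ultimately have "normalizes S C (a1, a2) T m1 m2"
    unfolding normalizes_def feasible_schedule_def using traj by simp
  then show thesis
    using that img by blast
qed

lemma axis_separated_paths_to_vertices:
  assumes "compact (inner S)" "(p1, p2) \<in> F2 S"
  obtains u h1 h2 c1 c2 where "u \<in> axis_directions"
    "h1 \<in> frontier (inner S)" "h2 \<in> frontier (inner S)" "is_vertex (inner S) c1" "is_vertex (inner S) c2"
    "closed_segment p1 h1 \<union> closed_segment h1 c1 \<subseteq> inner S"
    "closed_segment p2 h2 \<union> closed_segment h2 c2 \<subseteq> inner S"
    "\<And>x1 x2. x1 \<in> closed_segment p1 h1 \<union> closed_segment h1 c1 \<Longrightarrow>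
      x2 \<in> closed_segment p2 h2 \<union> closed_segment h2 c2 \<Longrightarrow> 1 \<le> u \<bullet> (x1 - x2)"
proof -
  have p: "p1 \<in> inner S" "p2 \<in> inner S" "1 \<le> linf (p1 - p2)"
    using assms(2) unfolding F2_iff by auto
  obtain u where u: "u \<in> axis_directions" "1 \<le> u \<bullet> (p1 - p2)"
    using axis_direction_exists[OF p(3)] by blast
  have "u \<noteq> 0" "- u \<noteq> 0"
    using axis_direction_nonzero[OF u(1)] by simp_all
  obtain h1 c1 where h1: "h1 \<in> frontier (inner S)" "is_vertex (inner S) c1"
    "closed_segment p1 h1 \<union> closed_segment h1 c1 \<subseteq> inner S"
    and mono1: "\<And>x. x \<in> closed_segment p1 h1 \<union> closed_segment h1 c1 \<Longrightarrow> u \<bullet> p1 \<le> u \<bullet> x"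
    using monotone_path_to_vertex[OF assms(1) p(1) \<open>u \<noteq> 0\<close>] by blast
  obtain h2 c2 where h2: "h2 \<in> frontier (inner S)" "is_vertex (inner S) c2"
    "closed_segment p2 h2 \<union> closed_segment h2 c2 \<subseteq> inner S"
    and mono2: "\<And>x. x \<in> closed_segment p2 h2 \<union> closed_segment h2 c2 \<Longrightarrow> - u \<bullet> p2 \<le> - u \<bullet> x"
    using monotone_path_to_vertex[OF assms(1) p(2) \<open>- u \<noteq> 0\<close>] by blast
  have "1 \<le> u \<bullet> (x1 - x2)"
    if "x1 \<in> closed_segment p1 h1 \<union> closed_segment h1 c1" "x2 \<in> closed_segment p2 h2 \<union> closed_segment h2 c2" for x1 x2
    using mono1[OF that(1)] mono2[OF that(2)] u(2) by (simp add: inner_diff_right)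
  then show thesis
    by (rule that[OF u(1) h1(1) h2(1) h1(2) h2(2) h1(3) h2(3)])
qed

theorem lemma7p1:
  assumes "polygonal_domain S" and "P \<in> F2 S"
  shows "(\<exists>T m1 m2. normalizes S (boundary_config S) P T m1 m2 \<and>
                    turns T m1 = {} \<and> turns T m2 = {}) \<and>
         (\<exists>T m1 m2. normalizes S (corner_config S) P T m1 m2 \<and>
                    (\<forall>x\<in>turns T m1. \<forall>y\<in>turns T m1. x = y) \<and>
                    (\<forall>x\<in>turns T m2. \<forall>y\<in>turns T m2. x = y))"
proof -
  obtain p1 p2 where P: "P = (p1, p2)"
    by (cases P) blast
  have A: "compact (inner S)"
    using assms(1) polygonal_domain_compact compact_inner by blast
  obtain u h1 h2 c1 c2 where u: "u \<in> axis_directions"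
    and h: "h1 \<in> frontier (inner S)" "h2 \<in> frontier (inner S)" "is_vertex (inner S) c1" "is_vertex (inner S) c2"
    and legs: "closed_segment p1 h1 \<union> closed_segment h1 c1 \<subseteq> inner S"
      "closed_segment p2 h2 \<union> closed_segment h2 c2 \<subseteq> inner S"
    and sep: "\<And>x1 x2. x1 \<in> closed_segment p1 h1 \<union> closed_segment h1 c1 \<Longrightarrow>
      x2 \<in> closed_segment p2 h2 \<union> closed_segment h2 c2 \<Longrightarrow> 1 \<le> u \<bullet> (x1 - x2)"
    using axis_separated_paths_to_vertices[OF A assms(2)[unfolded P]] by blast
  have degenerate_second_leg: "closed_segment p h \<union> closed_segment h h = closed_segment p h" for p h :: pt
    by auto
  have boundary_end: "boundary_config S (h1, h2)" if "(h1, h2) \<in> F2 S"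
    using that h unfolding boundary_config_def by simp
  have first_legs: "closed_segment p1 h1 \<subseteq> inner S" "closed_segment p2 h2 \<subseteq> inner S"
    using legs by auto
  obtain T m1 m2 where "normalizes S (boundary_config S) P T m1 m2"
    "m1 ` {0..T} = closed_segment p1 h1" "m2 ` {0..T} = closed_segment p2 h2"
    using normalizes_by_two_leg_motions[of u p1 h1 h1 S p2 h2 h2 "boundary_config S", unfolded degenerate_second_leg,
        OF u first_legs sep[OF UnI1 UnI1] boundary_end] unfolding P by blast
  then have boundary: "\<exists>T m1 m2. normalizes S (boundary_config S) P T m1 m2 \<and> turns T m1 = {} \<and> turns T m2 = {}"
    using turns_segment by blast
  have corner_end: "corner_config S (c1, c2)" if "(c1, c2) \<in> F2 S"
    using that h unfolding corner_config_def by simp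
  obtain T m1 m2 where "normalizes S (corner_config S) P T m1 m2"
    "m1 ` {0..T} = closed_segment p1 h1 \<union> closed_segment h1 c1"
    "m2 ` {0..T} = closed_segment p2 h2 \<union> closed_segment h2 c2"
    using normalizes_by_two_leg_motions[where C = "corner_config S", OF u legs sep corner_end] unfolding P by blast
  moreover have "turns T m1 \<subseteq> {h1}" "turns T m2 \<subseteq> {h2}"
    using turns_two_legs calculation(2,3) by blast+
  ultimately show ?thesis
    using boundary by blast
qed

end
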